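(* Let $\mathbb{T}$ be a geometric theory over $\Sigma$. The topological groupoid $\mathbf{M}_{\mathbb{T}}=(I_{\mathbb{T}}\rightrightarrows M_{\mathbb{T}})$ of $\mathbb{S}$-indexed $\mathbb{T}$-models and isomorphisms is an open topological groupoid, i.e.\ the domain and codomain maps $d,c:I_{\mathbb{T}}\to M_{\mathbb{T}}$ are open maps.
   Context: Let $\Sigma$ be a single-sorted first-order signature with equality, $\kappa\geq|\Sigma|+\aleph_0$ an infinite cardinal, and $\mathbb{S}$ a fixed set of cardinality at least $\kappa$. An $\mathbb{S}$-indexed $\Sigma$-structure is one whose underlying set is a quotient $A/{\sim}$ of a subset $A\subseteq\mathbb{S}$ (elements $[a]$). $M_\Sigma$ is the set of all such structures and $I_\Sigma$ the set of all isomorphisms between them, with domain and codomain maps $d,c$. The logical topology on $M_\Sigma$ is the coarsest containing the sets $\{\mathbf{M}:[a]\in\mathbf{M}\}$ ($a\in\mathbb{S}$), $\{\mathbf{M}:[\mathbf{a}]\in R^{\mathbf{M}}\}$ (each $n$-ary relation symbol $R$ including equality and nullary symbols, $\mathbf{a}$ an $n$-tuple from $\mathbb{S}$), and $\{\mathbf{M}:f^{\mathbf{M}}([\mathbf{a}])=[b]\}$ (each function symbol $f$). The logical topology on $I_\Sigma$ is the coarsest making $d,c$ continuous and containing all $\{\mathbf{f}:[a]\in d(\mathbf{f}),[b]\in c(\mathbf{f}),\mathbf{f}([a])=[b]\}$. $M_{\mathbb{T}}\subseteq M_\Sigma$ is the set of $\mathbb{S}$-indexed $\mathbb{T}$-models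 and $I_{\mathbb{T}}\subseteq I_\Sigma$ the isomorphisms between them, with subspace topologies, forming a topological groupoid with composition, identities and inverses. *)

theory Defs
  imports "HOL-Analysis.Analysis" "HOL-Library.Equipollence"
begin

datatype 'f trm = Var nat | Fn 'f "'f trm list"

datatype ('f, 'r, 'i) gfm =
    GTop
  | GEq "'f trm" "'f trm"
  | GRel 'r "'f trm list"
  | GConj "('f, 'r, 'i) gfm" "('f, 'r, 'i) gfm"
  | GDisj "'i set" "'i \<Rightarrow> ('f, 'r, 'i) gfm"
  | GEx nat "('f, 'r, 'i) gfm"

primrec fv_trm :: "'f trm \<Rightarrow> nat set" where
  "fv_trm (Var n) = {n}"
| "fv_trm (Fn f ts) = \<Union> (set (map fv_trm ts))"

primrec wf_trm :: "('f \<Rightarrow> nat) \<Rightarrow> 'f trm \<Rightarrow> bool" where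
  "wf_trm ar_f (Var n) = True"
| "wf_trm ar_f (Fn f ts) = (length ts = ar_f f \<and> list_all id (map (wf_trm ar_f) ts))"

primrec fv_fm :: "('f, 'r, 'i) gfm \<Rightarrow> nat set" where
  "fv_fm GTop = {}"
| "fv_fm (GEq t u) = fv_trm t \<union> fv_trm u"
| "fv_fm (GRel R ts) = (\<Union>t\<in>set ts. fv_trm t)"
| "fv_fm (GConj \<phi> \<psi>) = fv_fm \<phi> \<union> fv_fm \<psi>"
| "fv_fm (GDisj I F) = \<Union> ((fv_fm \<circ> F) ` I)"
| "fv_fm (GEx x \<phi>) = fv_fm \<phi> - {x}"

primrec wf_fm :: "('f \<Rightarrow> nat) \<Rightarrow> ('r \<Rightarrow> nat) \<Rightarrow> ('f, 'r, 'i) gfm \<Rightarrow> bool" where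
  "wf_fm ar_f ar_r GTop = True"
| "wf_fm ar_f ar_r (GEq t u) = (wf_trm ar_f t \<and> wf_trm ar_f u)"
| "wf_fm ar_f ar_r (GRel R ts) = (length ts = ar_r R \<and> (\<forall>t\<in>set ts. wf_trm ar_f t))"
| "wf_fm ar_f ar_r (GConj \<phi> \<psi>) = (wf_fm ar_f ar_r \<phi> \<and> wf_fm ar_f ar_r \<psi>)"
| "wf_fm ar_f ar_r (GDisj I F) = (\<forall>i\<in>I. (wf_fm ar_f ar_r \<circ> F) i)"
| "wf_fm ar_f ar_r (GEx x \<phi>) = wf_fm ar_f ar_r \<phi>"

text \<open>A geometric sequent \<open>\<phi> \<turnstile>_xs \<psi>\<close>: a context (finite list of variables), premise, conclusion.\<close>

type_synonym ('f, 'r, 'i) gseq = "nat list \<times> ('f, 'r, 'i) gfm \<times> ('f, 'r, 'i) gfm"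

definition wf_seq :: "('f \<Rightarrow> nat) \<Rightarrow> ('r \<Rightarrow> nat) \<Rightarrow> ('f, 'r, 'i) gseq \<Rightarrow> bool" where
  "wf_seq ar_f ar_r s = (case s of (xs, \<phi>, \<psi>) \<Rightarrow>
     wf_fm ar_f ar_r \<phi> \<and> wf_fm ar_f ar_r \<psi> \<and> fv_fm \<phi> \<union> fv_fm \<psi> \<subseteq> set xs)"

definition geometric_theory :: "('f \<Rightarrow> nat) \<Rightarrow> ('r \<Rightarrow> nat) \<Rightarrow> ('f, 'r, 'i) gseq set \<Rightarrow> bool" where
  "geometric_theory ar_f ar_r T = (\<forall>s\<in>T. wf_seq ar_f ar_r s)"

text \<open>An S-indexed structure: a subset A = scarr of S, an equivalence relation seqv on A;
the underlying set is A // seqv (elements are the classes [a]); relations are sets of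
tuples (lists) of classes, functions act on tuples of classes. Interpretations are
extensional (function values {} outside the domain), so that a structure is determined
by its mathematical content.\<close>

record ('s, 'f, 'r) sstr =
  scarr :: "'s set"
  seqv  :: "('s \<times> 's) set"
  srel  :: "'r \<Rightarrow> 's set list set"
  sfun  :: "'f \<Rightarrow> 's set list \<Rightarrow> 's set"

definition elems :: "('s, 'f, 'r) sstr \<Rightarrow> 's set set" where
  "elems M = scarr M // seqv M"

definition cls :: "('s, 'f, 'r) sstr \<Rightarrow> 's \<Rightarrow> 's set" where
  "cls M a = seqv M `` {a}"

definition is_struct :: "('f \<Rightarrow> nat) \<Rightarrow> ('r \<Rightarrow> nat) \<Rightarrow> 's set \<Rightarrow> ('s, 'f, 'r) sstr \<Rightarrow> bool" where
  "is_struct ar_f ar_r S M =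
     (scarr M \<subseteq> S \<and> equiv (scarr M) (seqv M)
      \<and> (\<forall>R. srel M R \<subseteq> {xs. length xs = ar_r R \<and> set xs \<subseteq> elems M})
      \<and> (\<forall>f xs. if length xs = ar_f f \<and> set xs \<subseteq> elems M
                then sfun M f xs \<in> elems M else sfun M f xs = {}))"

primrec teval :: "('s, 'f, 'r) sstr \<Rightarrow> (nat \<Rightarrow> 's set) \<Rightarrow> 'f trm \<Rightarrow> 's set" where
  "teval M v (Var n) = v n"
| "teval M v (Fn f ts) = sfun M f (map (teval M v) ts)"

primrec sat :: "('s, 'f, 'r) sstr \<Rightarrow> (nat \<Rightarrow> 's set) \<Rightarrow> ('f, 'r, 'i) gfm \<Rightarrow> bool" where
  "sat M v GTop = True"
| "sat M v (GEq t u) = (teval M v t = teval M v u)"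
| "sat M v (GRel R ts) = (map (teval M v) ts \<in> srel M R)"
| "sat M v (GConj \<phi> \<psi>) = (sat M v \<phi> \<and> sat M v \<psi>)"
| "sat M v (GDisj I F) = (\<exists>i\<in>I. (sat M v \<circ> F) i)"
| "sat M v (GEx x \<phi>) = (\<exists>e\<in>elems M. sat M (v(x := e)) \<phi>)"

definition sat_seq :: "('s, 'f, 'r) sstr \<Rightarrow> ('f, 'r, 'i) gseq \<Rightarrow> bool" where
  "sat_seq M s = (case s of (xs, \<phi>, \<psi>) \<Rightarrow>
     (\<forall>v. (\<forall>x\<in>set xs. v x \<in> elems M) \<longrightarrow> sat M v \<phi> \<longrightarrow> sat M v \<psi>))"

definition MSig :: "('f \<Rightarrow> nat) \<Rightarrow> ('r \<Rightarrow> nat) \<Rightarrow> 's set \<Rightarrow> ('s, 'f, 'r) sstr set" where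
  "MSig ar_f ar_r S = {M. is_struct ar_f ar_r S M}"

text \<open>Isomorphisms are triples (domain, codomain, bijection of underlying sets); the map is
extensional ({} outside the domain).\<close>

type_synonym ('s, 'f, 'r) siso = "('s, 'f, 'r) sstr \<times> ('s, 'f, 'r) sstr \<times> ('s set \<Rightarrow> 's set)"

definition is_iso :: "('f \<Rightarrow> nat) \<Rightarrow> ('r \<Rightarrow> nat) \<Rightarrow> 's set
    \<Rightarrow> ('s, 'f, 'r) sstr \<Rightarrow> ('s, 'f, 'r) sstr \<Rightarrow> ('s set \<Rightarrow> 's set) \<Rightarrow> bool" where
  "is_iso ar_f ar_r S M N g =
     (is_struct ar_f ar_r S M \<and> is_struct ar_f ar_r S N
      \<and> bij_betw g (elems M) (elems N)
      \<and> (\<forall>x. x \<notin> elems M \<longrightarrow> g x = {})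
      \<and> (\<forall>R xs. set xs \<subseteq> elems M \<longrightarrow> (xs \<in> srel M R \<longleftrightarrow> map g xs \<in> srel N R))
      \<and> (\<forall>f xs. length xs = ar_f f \<and> set xs \<subseteq> elems M \<longrightarrow>
                g (sfun M f xs) = sfun N f (map g xs)))"

definition ISig :: "('f \<Rightarrow> nat) \<Rightarrow> ('r \<Rightarrow> nat) \<Rightarrow> 's set \<Rightarrow> ('s, 'f, 'r) siso set" where
  "ISig ar_f ar_r S = {(M, N, g). is_iso ar_f ar_r S M N g}"

definition idom :: "('s, 'f, 'r) siso \<Rightarrow> ('s, 'f, 'r) sstr" where
  "idom p = fst p"

definition icod :: "('s, 'f, 'r) siso \<Rightarrow> ('s, 'f, 'r) sstr" where
  "icod p = fst (snd p)"

definition imap :: "('s, 'f, 'r) siso \<Rightarrow> 's set \<Rightarrow> 's set" where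
  "imap p = snd (snd p)"

text \<open>Subbasis of the logical topology on M_Sigma (the whole space is included so that the
generated topology has M_Sigma as its underlying set).\<close>

definition MSub :: "('f \<Rightarrow> nat) \<Rightarrow> ('r \<Rightarrow> nat) \<Rightarrow> 's set \<Rightarrow> ('s, 'f, 'r) sstr set set" where
  "MSub ar_f ar_r S =
     {MSig ar_f ar_r S}
   \<union> {{M \<in> MSig ar_f ar_r S. a \<in> scarr M} | a. a \<in> S}
   \<union> {{M \<in> MSig ar_f ar_r S. a \<in> scarr M \<and> b \<in> scarr M \<and> (a, b) \<in> seqv M} | a b. a \<in> S \<and> b \<in> S}
   \<union> {{M \<in> MSig ar_f ar_r S. set as \<subseteq> scarr M \<and> map (cls M) as \<in> srel M R} | R as.
         length as = ar_r R \<and> set as \<subseteq> S}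
   \<union> {{M \<in> MSig ar_f ar_r S. set as \<subseteq> scarr M \<and> b \<in> scarr M
          \<and> sfun M f (map (cls M) as) = cls M b} | f as b.
         length as = ar_f f \<and> set as \<subseteq> S \<and> b \<in> S}"

definition MTop :: "('f \<Rightarrow> nat) \<Rightarrow> ('r \<Rightarrow> nat) \<Rightarrow> 's set \<Rightarrow> ('s, 'f, 'r) sstr topology" where
  "MTop ar_f ar_r S = topology_generated_by (MSub ar_f ar_r S)"

definition ISub :: "('f \<Rightarrow> nat) \<Rightarrow> ('r \<Rightarrow> nat) \<Rightarrow> 's set \<Rightarrow> ('s, 'f, 'r) siso set set" where
  "ISub ar_f ar_r S =
     {ISig ar_f ar_r S}
   \<union> {{p \<in> ISig ar_f ar_r S. idom p \<in> U} | U. openin (MTop ar_f ar_r S) U}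
   \<union> {{p \<in> ISig ar_f ar_r S. icod p \<in> U} | U. openin (MTop ar_f ar_r S) U}
   \<union> {{p \<in> ISig ar_f ar_r S. a \<in> scarr (idom p) \<and> b \<in> scarr (icod p)
          \<and> imap p (cls (idom p) a) = cls (icod p) b} | a b. a \<in> S \<and> b \<in> S}"

definition ITop :: "('f \<Rightarrow> nat) \<Rightarrow> ('r \<Rightarrow> nat) \<Rightarrow> 's set \<Rightarrow> ('s, 'f, 'r) siso topology" where
  "ITop ar_f ar_r S = topology_generated_by (ISub ar_f ar_r S)"

definition MT :: "('f \<Rightarrow> nat) \<Rightarrow> ('r \<Rightarrow> nat) \<Rightarrow> 's set \<Rightarrow> ('f, 'r, 'i) gseq set
    \<Rightarrow> ('s, 'f, 'r) sstr set" where
  "MT ar_f ar_r S T = {M \<in> MSig ar_f ar_r S. \<forall>s\<in>T. sat_seq M s}"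

definition IT :: "('f \<Rightarrow> nat) \<Rightarrow> ('r \<Rightarrow> nat) \<Rightarrow> 's set \<Rightarrow> ('f, 'r, 'i) gseq set
    \<Rightarrow> ('s, 'f, 'r) siso set" where
  "IT ar_f ar_r S T = {p \<in> ISig ar_f ar_r S. idom p \<in> MT ar_f ar_r S T \<and> icod p \<in> MT ar_f ar_r S T}"

end

theory Submission
  imports Defs
begin

(* Openness of the domain map d: a basic neighbourhood of an isomorphism f : M \<rightarrow> N fixes a finite
   set of atomic facts about finitely many indices F of N, and finitely many values f [a] = [b].
   Choosing indices c b of M with f [c b] = [b] for b \<in> F, the same facts can be stated about M:
   the atoms renamed along c and the equations [a] = [c b]. They define an open neighbourhood W
   of M. Each M' \<in> W is the domain of an isomorphism in the given neighbourhood: as S is infinite,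
   M' has an isomorphic copy N' in which the index b \<in> F names the class of c b, and N' then
   satisfies the facts about N. Isomorphisms preserve models of a geometric theory, so d stays
   open on models of T. The codomain map is d composed with inversion, a homeomorphism of the
   space of isomorphisms. *)

lemma inj_on_into_Diff_finite:
  assumes "infinite S" "finite F"
  shows "\<exists>h. inj_on h S \<and> h ` S \<subseteq> S - F"
  using assms(2)
proof (induction F rule: finite_induct)
  case empty
  have "inj_on id S \<and> id ` S \<subseteq> S - {}"
    by simp
  then show ?case
    by blast
next
  case (insert a F)
  then obtain h where h: "inj_on h S" "h ` S \<subseteq> S - F"
    by blast
  obtain h' where h': "bij_betw h' (S - F) (S - F - {a})"
    using infinite_imp_bij_betw[OF Diff_infinite_finite[OF insert.hyps(1) assms(1)]] by blast
  have "inj_on (h' \<circ> h) S"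
    using comp_inj_on[OF h(1) inj_on_subset[OF bij_betw_imp_inj_on[OF h'] h(2)]] .
  moreover have "(h' \<circ> h) ` S \<subseteq> h' ` (S - F)"
    unfolding image_comp[symmetric] using h(2) by (rule image_mono)
  moreover have "h' ` (S - F) = S - insert a F"
    using bij_betw_imp_surj_on[OF h'] by blast
  ultimately have "inj_on (h' \<circ> h) S \<and> (h' \<circ> h) ` S \<subseteq> S - insert a F"
    by simp
  then show ?case
    by blast
qed

(* The conditions [a] \<in> M, [a] = [b], R([as]) and f([as]) = [b] defining the subbasic
   open sets of the logical topology. *)
datatype ('s, dead 'f, dead 'r) atom =
    Elem 's
  | Eqv 's 's
  | Rel 'r "'s list"
  | Fun 'f "'s list" 's

primrec holds :: "('s, 'f, 'r) sstr \<Rightarrow> ('s, 'f, 'r) atom \<Rightarrow> bool" where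
  "holds M (Elem a) \<longleftrightarrow> a \<in> scarr M"
| "holds M (Eqv a b) \<longleftrightarrow> a \<in> scarr M \<and> b \<in> scarr M \<and> (a, b) \<in> seqv M"
| "holds M (Rel R xs) \<longleftrightarrow> set xs \<subseteq> scarr M \<and> map (cls M) xs \<in> srel M R"
| "holds M (Fun f xs b) \<longleftrightarrow>
     set xs \<subseteq> scarr M \<and> b \<in> scarr M \<and> sfun M f (map (cls M) xs) = cls M b"

primrec wf_atom :: "('f \<Rightarrow> nat) \<Rightarrow> ('r \<Rightarrow> nat) \<Rightarrow> ('s, 'f, 'r) atom \<Rightarrow> bool" where
  "wf_atom ar_f ar_r (Elem a) \<longleftrightarrow> True"
| "wf_atom ar_f ar_r (Eqv a b) \<longleftrightarrow> True"
| "wf_atom ar_f ar_r (Rel R xs) \<longleftrightarrow> length xs = ar_r R"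
| "wf_atom ar_f ar_r (Fun f xs b) \<longleftrightarrow> length xs = ar_f f"

lemma holds_set_atom: "holds M \<alpha> \<Longrightarrow> set_atom \<alpha> \<subseteq> scarr M"
  by (cases \<alpha>) auto

lemma wf_atom_map_atom [simp]: "wf_atom ar_f ar_r (map_atom c \<alpha>) \<longleftrightarrow> wf_atom ar_f ar_r \<alpha>"
  by (cases \<alpha>) auto

definition sends :: "('s, 'f, 'r) sstr \<Rightarrow> ('s, 'f, 'r) sstr \<Rightarrow> ('s set \<Rightarrow> 's set) \<Rightarrow> 's \<Rightarrow> 's \<Rightarrow> bool"
  where "sends M N g a b \<longleftrightarrow> a \<in> scarr M \<and> b \<in> scarr N \<and> g (cls M a) = cls N b"

context
  fixes ar_f :: "'f \<Rightarrow> nat" and ar_r :: "'r \<Rightarrow> nat" and S :: "'s set"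
begin

abbreviation "struct \<equiv> is_struct ar_f ar_r S"

abbreviation "isom \<equiv> is_iso ar_f ar_r S"

lemma struct_equiv: "struct M \<Longrightarrow> equiv (scarr M) (seqv M)"
  by (simp add: is_struct_def)

lemma struct_scarr_subset: "struct M \<Longrightarrow> scarr M \<subseteq> S"
  by (simp add: is_struct_def)

lemma cls_in_elems: "struct M \<Longrightarrow> a \<in> scarr M \<Longrightarrow> cls M a \<in> elems M"
  unfolding cls_def elems_def by (simp add: quotientI)

lemma cls_eq_iff:
  "struct M \<Longrightarrow> a \<in> scarr M \<Longrightarrow> b \<in> scarr M \<Longrightarrow> cls M a = cls M b \<longleftrightarrow> (a, b) \<in> seqv M"
  unfolding cls_def using struct_equiv equiv_class_eq_iff by fastforce

lemma elemsE:
  assumes "struct M" "X \<in> elems M"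
  obtains a where "a \<in> scarr M" "X = cls M a"
  using assms unfolding cls_def elems_def by (auto elim: quotientE)

lemma empty_notin_elems: "struct M \<Longrightarrow> {} \<notin> elems M"
  unfolding elems_def using struct_equiv in_quotient_imp_non_empty by blast

lemma sfun_if:
  "struct M \<Longrightarrow> (if length xs = ar_f f \<and> set xs \<subseteq> elems M
                   then sfun M f xs \<in> elems M else sfun M f xs = {})"
  unfolding is_struct_def by blast

lemma sfun_in_elems:
  "struct M \<Longrightarrow> length xs = ar_f f \<Longrightarrow> set xs \<subseteq> elems M \<Longrightarrow> sfun M f xs \<in> elems M"
  using sfun_if[of M xs f] by simp

lemma sfun_eq_empty:
  "struct M \<Longrightarrow> \<not> (length xs = ar_f f \<and> set xs \<subseteq> elems M) \<Longrightarrow> sfun M f xs = {}"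
  using sfun_if[of M xs f] by simp

lemma srel_subset_elems: "struct M \<Longrightarrow> xs \<in> srel M R \<Longrightarrow> set xs \<subseteq> elems M"
  unfolding is_struct_def by blast

lemma
  assumes "isom M N g"
  shows is_iso_struct_dom: "struct M"
    and is_iso_struct_cod: "struct N"
    and is_iso_bij_betw: "bij_betw g (elems M) (elems N)"
    and is_iso_srel_iff: "set xs \<subseteq> elems M \<Longrightarrow> xs \<in> srel M R \<longleftrightarrow> map g xs \<in> srel N R"
    and is_iso_sfun: "length xs = ar_f f \<Longrightarrow> set xs \<subseteq> elems M \<Longrightarrow>
                    g (sfun M f xs) = sfun N f (map g xs)"
  using assms by (simp_all add: is_iso_def)

lemma is_iso_image_elems: "isom M N g \<Longrightarrow> g ` elems M = elems N"
  using is_iso_bij_betw bij_betw_imp_surj_on by blast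

lemma is_iso_inj_on: "isom M N g \<Longrightarrow> inj_on g (elems M)"
  using is_iso_bij_betw bij_betw_imp_inj_on by blast

lemma is_iso_outside_elems: "isom M N g \<Longrightarrow> X \<notin> elems M \<Longrightarrow> g X = {}"
  by (simp add: is_iso_def)

lemma is_iso_cls_eq_iff:
  "isom M N g \<Longrightarrow> a \<in> scarr M \<Longrightarrow> b \<in> scarr M \<Longrightarrow> g (cls M a) = g (cls M b) \<longleftrightarrow> (a, b) \<in> seqv M"
  using inj_on_eq_iff[OF is_iso_inj_on] cls_in_elems cls_eq_iff is_iso_struct_dom by metis

lemma is_iso_sends_surj:
  assumes g: "isom M N g" and b: "b \<in> scarr N"
  obtains a where "sends M N g a b"
proof -
  have "cls N b \<in> g ` elems M"
    using cls_in_elems[OF is_iso_struct_cod[OF g] b] is_iso_image_elems[OF g] by simp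
  then obtain X where "X \<in> elems M" "cls N b = g X"
    by blast
  moreover obtain a where "a \<in> scarr M" "X = cls M a"
    using elemsE[OF is_iso_struct_dom[OF g] \<open>X \<in> elems M\<close>] .
  ultimately have "sends M N g a b"
    using b by (simp add: sends_def)
  then show ?thesis ..
qed

lemma sends_iff_holds_Eqv:
  assumes g: "isom M N g" and "sends M N g a' b"
  shows "sends M N g a b \<longleftrightarrow> holds M (Eqv a a')"
proof
  assume "sends M N g a b"
  with assms(2) have "a \<in> scarr M" "a' \<in> scarr M" "g (cls M a) = g (cls M a')"
    by (simp_all add: sends_def)
  then show "holds M (Eqv a a')"
    using is_iso_cls_eq_iff[OF g] by simp
next
  assume "holds M (Eqv a a')"
  then have "cls M a = cls M a'"
    using cls_eq_iff[OF is_iso_struct_dom[OF g]] by simp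
  with assms(2) \<open>holds M (Eqv a a')\<close> show "sends M N g a b"
    by (simp add: sends_def)
qed

section \<open>Isomorphisms preserve models\<close>

lemma teval_is_iso:
  assumes g: "isom M N g" and "wf_trm ar_f t"
    and "\<forall>x\<in>fv_trm t. v x \<in> elems M \<and> v' x = g (v x)"
  shows "teval M v t \<in> elems M \<and> teval N v' t = g (teval M v t)"
  using assms(2,3)
proof (induction t)
  case (Fn f ts)
  have IH: "teval M v t \<in> elems M \<and> teval N v' t = g (teval M v t)" if "t \<in> set ts" for t
  proof (rule Fn.IH[OF that])
    show "wf_trm ar_f t"
      using Fn.prems(1) that by (simp add: list_all_iff)
    show "\<forall>x\<in>fv_trm t. v x \<in> elems M \<and> v' x = g (v x)"
      using Fn.prems(2) that by simp
  qed
  then have args: "map (teval N v') ts = map g (map (teval M v) ts)"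
    and args_in: "set (map (teval M v) ts) \<subseteq> elems M"
    by auto
  have "length (map (teval M v) ts) = ar_f f"
    using Fn.prems(1) by simp
  with args_in show ?case
    unfolding teval.simps args
    using is_iso_sfun[OF g] sfun_in_elems[OF is_iso_struct_dom[OF g]] by simp
qed simp

lemma sat_is_iso:
  assumes g: "isom M N g" and "wf_fm ar_f ar_r \<phi>"
    and "\<forall>x\<in>fv_fm \<phi>. v x \<in> elems M \<and> v' x = g (v x)"
  shows "sat M v \<phi> \<longleftrightarrow> sat N v' \<phi>"
  using assms(2,3)
proof (induction \<phi> arbitrary: v v')
  case (GEq t u)
  have "teval M v t \<in> elems M \<and> teval N v' t = g (teval M v t)"
    and "teval M v u \<in> elems M \<and> teval N v' u = g (teval M v u)"
    using GEq.prems by (auto intro!: teval_is_iso[OF g])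
  then show ?case
    using inj_on_eq_iff[OF is_iso_inj_on[OF g]] by simp
next
  case (GRel R ts)
  have "teval M v t \<in> elems M \<and> teval N v' t = g (teval M v t)" if "t \<in> set ts" for t
    using GRel.prems that by (intro teval_is_iso[OF g]) auto
  then have args: "map (teval N v') ts = map g (map (teval M v) ts)"
    and args_in: "set (map (teval M v) ts) \<subseteq> elems M"
    by auto
  show ?case
    by (simp only: sat.simps args is_iso_srel_iff[OF g args_in])
next
  case (GConj \<phi>1 \<phi>2)
  have "sat M v \<phi>1 \<longleftrightarrow> sat N v' \<phi>1"
    using GConj.prems by (intro GConj.IH(1)) auto
  moreover have "sat M v \<phi>2 \<longleftrightarrow> sat N v' \<phi>2"
    using GConj.prems by (intro GConj.IH(2)) auto
  ultimately show ?case by simp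
next
  case (GDisj I F)
  have "sat M v (F i) \<longleftrightarrow> sat N v' (F i)" if "i \<in> I" for i
    using GDisj.prems that by (intro GDisj.IH) auto
  then show ?case by simp
next
  case (GEx x \<phi>)
  have IH: "sat M (v(x := e)) \<phi> \<longleftrightarrow> sat N (v'(x := g e)) \<phi>" if "e \<in> elems M" for e
    using GEx.prems that by (intro GEx.IH) auto
  have "sat N v' (GEx x \<phi>) \<longleftrightarrow> (\<exists>e\<in>g ` elems M. sat N (v'(x := e)) \<phi>)"
    using is_iso_image_elems[OF g] by simp
  also have "\<dots> \<longleftrightarrow> (\<exists>e\<in>elems M. sat M (v(x := e)) \<phi>)"
    using IH by blast
  finally show ?case
    by simp
qed simp_all

lemma MT_is_iso:
  assumes g: "isom M N g" and M: "M \<in> MT ar_f ar_r S T" and T: "geometric_theory ar_f ar_r T"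
  shows "N \<in> MT ar_f ar_r S T"
proof -
  have "sat_seq N (xs, \<phi>, \<psi>)" if s: "(xs, \<phi>, \<psi>) \<in> T" for xs \<phi> \<psi>
    unfolding sat_seq_def prod.case
  proof (intro allI impI)
    fix v' assume v': "\<forall>x\<in>set xs. v' x \<in> elems N" and "sat N v' \<phi>"
    define v where "v = inv_into (elems M) g \<circ> v'"
    have v: "\<forall>x\<in>set xs. v x \<in> elems M \<and> v' x = g (v x)"
      using v' is_iso_image_elems[OF g] unfolding v_def by (auto simp: inv_into_into f_inv_into_f)
    have wf: "wf_fm ar_f ar_r \<phi>" "wf_fm ar_f ar_r \<psi>" "fv_fm \<phi> \<union> fv_fm \<psi> \<subseteq> set xs"
      using T s unfolding geometric_theory_def wf_seq_def by auto
    have "sat M v \<phi>"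
      using sat_is_iso[OF g wf(1)] v wf(3) \<open>sat N v' \<phi>\<close> by auto
    then have "sat M v \<psi>"
      using M s v unfolding MT_def sat_seq_def by auto
    then show "sat N v' \<psi>"
      using sat_is_iso[OF g wf(2), of v v'] v wf(3) by auto
  qed
  then have "\<forall>s\<in>T. sat_seq N s"
    by (metis prod_cases3)
  moreover have "N \<in> MSig ar_f ar_r S"
    using is_iso_struct_cod[OF g] by (simp add: MSig_def)
  ultimately show ?thesis
    unfolding MT_def by blast
qed

section \<open>Diagrams and the logical topology on structures\<close>

lemma holds_is_iso_iff:
  assumes g: "isom M N g" and "wf_atom ar_f ar_r \<alpha>"
    and c: "\<forall>b\<in>set_atom \<alpha>. sends M N g (c b) b"
  shows "holds N \<alpha> \<longleftrightarrow> holds M (map_atom c \<alpha>)"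
proof -
  have scarr: "c b \<in> scarr M" "b \<in> scarr N" and cls: "cls N b = g (cls M (c b))"
    if "b \<in> set_atom \<alpha>" for b
    using c that by (auto simp: sends_def)
  have cls_map: "map (cls N) bs = map g (map (cls M) (map c bs))"
    and cls_map_in: "set (map (cls M) (map c bs)) \<subseteq> elems M"
    if "set bs \<subseteq> set_atom \<alpha>" for bs
    using that scarr cls cls_in_elems[OF is_iso_struct_dom[OF g]] by auto
  show ?thesis
  proof (cases \<alpha>)
    case (Eqv a b)
    then have "(a, b) \<in> seqv N \<longleftrightarrow> g (cls M (c a)) = g (cls M (c b))" if "a \<in> scarr N" "b \<in> scarr N"
      using cls_eq_iff[OF is_iso_struct_cod[OF g] that] cls by simp
    with Eqv show ?thesis
      using scarr is_iso_cls_eq_iff[OF g] by auto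
  next
    case (Rel R xs)
    then have xs: "set xs \<subseteq> set_atom \<alpha>"
      by simp
    have "map (cls N) xs \<in> srel N R \<longleftrightarrow> map (cls M) (map c xs) \<in> srel M R"
      unfolding cls_map[OF xs] using is_iso_srel_iff[OF g cls_map_in[OF xs]] by (rule sym)
    with Rel show ?thesis
      using scarr by auto
  next
    case (Fun f xs b)
    then have xs: "set xs \<subseteq> set_atom \<alpha>" and b: "b \<in> set_atom \<alpha>"
      by auto
    let ?ys = "map (cls M) (map c xs)"
    have len: "length ?ys = ar_f f"
      using Fun assms(2) by simp
    have "sfun N f (map (cls N) xs) = g (sfun M f ?ys)"
      unfolding cls_map[OF xs] using is_iso_sfun[OF g len cls_map_in[OF xs]] by (rule sym)
    moreover have "sfun M f ?ys \<in> elems M"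
      using sfun_in_elems[OF is_iso_struct_dom[OF g] len cls_map_in[OF xs]] .
    ultimately have "sfun N f (map (cls N) xs) = cls N b \<longleftrightarrow> sfun M f ?ys = cls M (c b)"
      using cls[OF b] inj_on_eq_iff[OF is_iso_inj_on[OF g]]
        cls_in_elems[OF is_iso_struct_dom[OF g] scarr(1)[OF b]] by simp
    with Fun show ?thesis
      using scarr by auto
  qed (use scarr in auto)
qed

definition diagram :: "('s, 'f, 'r) atom set \<Rightarrow> bool"
  where "diagram D \<longleftrightarrow> finite D \<and> (\<forall>\<alpha>\<in>D. wf_atom ar_f ar_r \<alpha> \<and> set_atom \<alpha> \<subseteq> S)"

definition diagram_nbhd :: "('s, 'f, 'r) atom set \<Rightarrow> ('s, 'f, 'r) sstr set"
  where "diagram_nbhd D = {M \<in> MSig ar_f ar_r S. \<forall>\<alpha>\<in>D. holds M \<alpha>}"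

lemma diagram_nbhd_Un: "diagram_nbhd (D \<union> D') = diagram_nbhd D \<inter> diagram_nbhd D'"
  unfolding diagram_nbhd_def by blast

lemma MSub_eq_diagram_nbhds:
  "MSub ar_f ar_r S = insert (MSig ar_f ar_r S)
     {diagram_nbhd {\<alpha>} | \<alpha>. wf_atom ar_f ar_r \<alpha> \<and> set_atom \<alpha> \<subseteq> S}"
proof -
  have "{M \<in> MSig ar_f ar_r S. a \<in> scarr M} = diagram_nbhd {Elem a}"
    and "{M \<in> MSig ar_f ar_r S. a \<in> scarr M \<and> b \<in> scarr M \<and> (a, b) \<in> seqv M}
         = diagram_nbhd {Eqv a b}"
    and "{M \<in> MSig ar_f ar_r S. set xs \<subseteq> scarr M \<and> map (cls M) xs \<in> srel M R}
         = diagram_nbhd {Rel R xs}"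
    and "{M \<in> MSig ar_f ar_r S. set xs \<subseteq> scarr M \<and> b \<in> scarr M
           \<and> sfun M f (map (cls M) xs) = cls M b} = diagram_nbhd {Fun f xs b}"
    for a b xs R f
    by (simp_all add: diagram_nbhd_def)
  then have "MSub ar_f ar_r S = insert (MSig ar_f ar_r S)
     ({diagram_nbhd {Elem a} | a. a \<in> S}
      \<union> {diagram_nbhd {Eqv a b} | a b. a \<in> S \<and> b \<in> S}
      \<union> {diagram_nbhd {Rel R xs} | R xs. length xs = ar_r R \<and> set xs \<subseteq> S}
      \<union> {diagram_nbhd {Fun f xs b} | f xs b. length xs = ar_f f \<and> set xs \<subseteq> S \<and> b \<in> S})"
    unfolding MSub_def by simp
  also have "\<dots> = insert (MSig ar_f ar_r S)
     {diagram_nbhd {\<alpha>} | \<alpha>. wf_atom ar_f ar_r \<alpha> \<and> set_atom \<alpha> \<subseteq> S}"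
  proof (intro arg_cong[where f = "insert _"] equalityI subsetI)
    fix X assume "X \<in> {diagram_nbhd {\<alpha>} | \<alpha>. wf_atom ar_f ar_r \<alpha> \<and> set_atom \<alpha> \<subseteq> S}"
    then obtain \<alpha> where "X = diagram_nbhd {\<alpha>}" "wf_atom ar_f ar_r \<alpha>" "set_atom \<alpha> \<subseteq> S"
      by blast
    then show "X \<in> {diagram_nbhd {Elem a} | a. a \<in> S}
      \<union> {diagram_nbhd {Eqv a b} | a b. a \<in> S \<and> b \<in> S}
      \<union> {diagram_nbhd {Rel R xs} | R xs. length xs = ar_r R \<and> set xs \<subseteq> S}
      \<union> {diagram_nbhd {Fun f xs b} | f xs b. length xs = ar_f f \<and> set xs \<subseteq> S \<and> b \<in> S}"
      by (cases \<alpha>) auto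
  qed force
  finally show ?thesis .
qed

lemma openin_diagram_nbhd:
  assumes "diagram D"
  shows "openin (MTop ar_f ar_r S) (diagram_nbhd D)"
proof -
  have "finite D" "\<forall>\<alpha>\<in>D. wf_atom ar_f ar_r \<alpha> \<and> set_atom \<alpha> \<subseteq> S"
    using assms by (simp_all add: diagram_def)
  then show ?thesis
  proof (induction D rule: finite_induct)
    case empty
    have "diagram_nbhd {} = MSig ar_f ar_r S"
      by (simp add: diagram_nbhd_def)
    then show ?case
      unfolding MTop_def by (auto intro: topology_generated_by_Basis simp: MSub_def)
  next
    case (insert \<alpha> D)
    have "openin (MTop ar_f ar_r S) (diagram_nbhd {\<alpha>})"
      unfolding MTop_def using insert.prems
      by (intro topology_generated_by_Basis) (auto simp: MSub_eq_diagram_nbhds)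
    then show ?case
      using insert diagram_nbhd_Un[of "{\<alpha>}" D] by (simp add: openin_Int)
  qed
qed

lemma topspace_MTop: "topspace (MTop ar_f ar_r S) = MSig ar_f ar_r S"
  unfolding MTop_def topology_generated_by_topspace MSub_eq_diagram_nbhds
  by (auto simp: diagram_nbhd_def)

lemma openin_MTop_diagram_nbhdE:
  assumes "openin (MTop ar_f ar_r S) U" "M \<in> U"
  obtains D where "diagram D" "M \<in> diagram_nbhd D" "diagram_nbhd D \<subseteq> U"
proof -
  have "generate_topology_on (MSub ar_f ar_r S) U"
    using assms(1) unfolding MTop_def openin_topology_generated_by_iff .
  then have "\<exists>D. diagram D \<and> M \<in> diagram_nbhd D \<and> diagram_nbhd D \<subseteq> U"
    using assms(2)
  proof (induction arbitrary: M)
    case (Int U1 U2)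
    then obtain D1 D2 where "diagram D1" "M \<in> diagram_nbhd D1" "diagram_nbhd D1 \<subseteq> U1"
      and "diagram D2" "M \<in> diagram_nbhd D2" "diagram_nbhd D2 \<subseteq> U2"
      by blast
    then show ?case
      by (intro exI[of _ "D1 \<union> D2"]) (auto simp: diagram_def diagram_nbhd_Un)
  next
    case (UN K)
    then show ?case by blast
  next
    case (Basis U)
    show ?case
    proof (cases "U = MSig ar_f ar_r S")
      case True
      then show ?thesis
        using Basis.prems by (intro exI[of _ "{}"]) (simp add: diagram_def diagram_nbhd_def)
    next
      case False
      then obtain \<alpha> where "U = diagram_nbhd {\<alpha>}" "wf_atom ar_f ar_r \<alpha>" "set_atom \<alpha> \<subseteq> S"
        using Basis.hyps unfolding MSub_eq_diagram_nbhds by blast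
      then show ?thesis
        using Basis.prems by (intro exI[of _ "{\<alpha>}"]) (simp add: diagram_def)
    qed
  qed simp
  then show ?thesis
    using that by blast
qed

section \<open>Renaming the indices of a structure\<close>

lemma elems_eq_image_cls: "elems M = cls M ` scarr M"
  by (auto simp: elems_def cls_def quotient_def)

(* The copy of M indexed by A along a map k from A onto the indices of M: the element
   corresponding to a class Q of M is the set of indices in A that k maps into Q. *)
definition pull_cls :: "('s, 'f, 'r) sstr \<Rightarrow> ('s \<Rightarrow> 's) \<Rightarrow> 's set \<Rightarrow> 's set \<Rightarrow> 's set"
  where "pull_cls M k A Q = (if Q \<in> elems M then {y \<in> A. cls M (k y) = Q} else {})"

definition pull_struct :: "('s, 'f, 'r) sstr \<Rightarrow> ('s \<Rightarrow> 's) \<Rightarrow> 's set \<Rightarrow> ('s, 'f, 'r) sstr"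
  where "pull_struct M k A =
    \<lparr>scarr = A, seqv = {(x, y). x \<in> A \<and> y \<in> A \<and> (k x, k y) \<in> seqv M},
     srel = \<lambda>R. map (pull_cls M k A) ` srel M R,
     sfun = \<lambda>f ys. if set ys \<subseteq> pull_cls M k A ` elems M
       then pull_cls M k A (sfun M f (map (inv_into (elems M) (pull_cls M k A)) ys)) else {}\<rparr>"

lemma cls_pull_struct:
  assumes M: "struct M" and k: "k ` A \<subseteq> scarr M" and y: "y \<in> A"
  shows "cls (pull_struct M k A) y = pull_cls M k A (cls M (k y))"
proof -
  have "(k y, k z) \<in> seqv M \<longleftrightarrow> cls M (k z) = cls M (k y)" if "z \<in> A" for z
    using cls_eq_iff[OF M] k y that by blast
  then show ?thesis
    using y cls_in_elems[OF M] k unfolding cls_def pull_struct_def pull_cls_def by auto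
qed

lemma elems_pull_struct:
  assumes M: "struct M" and k: "k ` A = scarr M"
  shows "elems (pull_struct M k A) = pull_cls M k A ` elems M"
proof -
  have "elems (pull_struct M k A) = cls (pull_struct M k A) ` A"
    by (simp add: elems_eq_image_cls pull_struct_def)
  also have "\<dots> = (\<lambda>y. pull_cls M k A (cls M (k y))) ` A"
    using cls_pull_struct[OF M] k by (intro image_cong) auto
  also have "\<dots> = pull_cls M k A ` cls M ` k ` A"
    by (simp add: image_image)
  finally show ?thesis
    by (simp add: k elems_eq_image_cls)
qed

lemma inj_on_pull_cls:
  assumes M: "struct M" and k: "k ` A = scarr M"
  shows "inj_on (pull_cls M k A) (elems M)"
proof (rule inj_onI)
  fix Q Q' assume Q: "Q \<in> elems M" "Q' \<in> elems M" and eq: "pull_cls M k A Q = pull_cls M k A Q'"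
  obtain a where "a \<in> scarr M" "Q = cls M a"
    using elemsE[OF M Q(1)] .
  with k obtain y where "y \<in> A" "cls M (k y) = Q"
    by (metis imageE)
  then have "y \<in> pull_cls M k A Q"
    using Q(1) by (simp add: pull_cls_def)
  then have "y \<in> pull_cls M k A Q'"
    using eq by simp
  then show "Q = Q'"
    using Q(2) \<open>cls M (k y) = Q\<close> by (simp add: pull_cls_def)
qed

lemma equiv_pull_struct:
  assumes M: "struct M" and k: "k ` A \<subseteq> scarr M"
  shows "equiv A (seqv (pull_struct M k A))"
proof (rule equivI)
  have eqv: "refl_on (scarr M) (seqv M)" "sym (seqv M)" "trans (seqv M)"
    using struct_equiv[OF M] by (simp_all add: equiv_def)
  show "seqv (pull_struct M k A) \<subseteq> A \<times> A"
    by (auto simp: pull_struct_def)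
  show "refl_on A (seqv (pull_struct M k A))"
    using eqv(1) k unfolding refl_on_def by (auto simp: pull_struct_def)
  show "sym (seqv (pull_struct M k A))"
    using eqv(2) by (auto simp: pull_struct_def intro!: symI dest: symD)
  show "trans (seqv (pull_struct M k A))"
    using eqv(3) by (auto simp: pull_struct_def intro!: transI dest: transD)
qed

lemma is_struct_pull_struct:
  assumes M: "struct M" and A: "A \<subseteq> S" and k: "k ` A = scarr M"
  shows "struct (pull_struct M k A)"
  unfolding is_struct_def
proof (intro conjI allI)
  let ?N = "pull_struct M k A" and ?g = "pull_cls M k A"
  have elems_N: "elems ?N = ?g ` elems M"
    using elems_pull_struct[OF M k] .
  show "scarr ?N \<subseteq> S"
    using A by (simp add: pull_struct_def)
  show "equiv (scarr ?N) (seqv ?N)"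
    using equiv_pull_struct[OF M equalityD1[OF k]] by (simp add: pull_struct_def)
  fix R
  show "srel ?N R \<subseteq> {xs. length xs = ar_r R \<and> set xs \<subseteq> elems ?N}"
  proof
    fix ys assume "ys \<in> srel ?N R"
    then obtain xs where xs: "xs \<in> srel M R" "ys = map ?g xs"
      by (auto simp: pull_struct_def)
    then have "length xs = ar_r R" "set xs \<subseteq> elems M"
      using M unfolding is_struct_def by blast+
    then show "ys \<in> {xs. length xs = ar_r R \<and> set xs \<subseteq> elems ?N}"
      using xs(2) elems_N image_mono[of "set xs" "elems M" ?g] by simp
  qed
next
  fix f ys
  let ?N = "pull_struct M k A" and ?g = "pull_cls M k A"
  let ?xs = "map (inv_into (elems M) ?g) ys"
  have elems_N: "elems ?N = ?g ` elems M"
    using elems_pull_struct[OF M k] .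
  show "if length ys = ar_f f \<and> set ys \<subseteq> elems ?N then sfun ?N f ys \<in> elems ?N else sfun ?N f ys = {}"
  proof (cases "set ys \<subseteq> elems ?N")
    case True
    then have xs: "set ?xs \<subseteq> elems M"
      using elems_N by (auto simp: inv_into_into)
    have sfun_N: "sfun ?N f ys = ?g (sfun M f ?xs)"
      using True elems_N by (simp add: pull_struct_def)
    show ?thesis
    proof (cases "length ys = ar_f f")
      case True
      then show ?thesis
        using sfun_N sfun_in_elems[OF M _ xs] elems_N \<open>set ys \<subseteq> elems ?N\<close> by simp
    next
      case False
      then have "sfun M f ?xs = {}"
        using sfun_eq_empty[OF M] by simp
      then show ?thesis
        using False sfun_N empty_notin_elems[OF M] by (simp add: pull_cls_def)
    qed
  next
    case False
    then show ?thesis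
      using elems_N by (simp add: pull_struct_def)
  qed
qed

lemma is_iso_pull_struct:
  assumes M: "struct M" and A: "A \<subseteq> S" and k: "k ` A = scarr M"
  shows "isom M (pull_struct M k A) (pull_cls M k A)"
  unfolding is_iso_def
proof (intro conjI allI impI)
  let ?N = "pull_struct M k A" and ?g = "pull_cls M k A"
  have elems_N: "elems ?N = ?g ` elems M"
    using elems_pull_struct[OF M k] .
  have inj: "inj_on ?g (elems M)"
    using inj_on_pull_cls[OF M k] .
  show "struct M" "struct ?N"
    using M is_struct_pull_struct[OF M A k] by simp_all
  show "bij_betw ?g (elems M) (elems ?N)"
    using inj elems_N by (simp add: bij_betw_def)
  show "?g x = {}" if "x \<notin> elems M" for x
    using that by (simp add: pull_cls_def)
  fix R xs assume xs: "set xs \<subseteq> elems M"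
  show "xs \<in> srel M R \<longleftrightarrow> map ?g xs \<in> srel ?N R"
  proof
    assume "map ?g xs \<in> srel ?N R"
    then obtain ys where ys: "ys \<in> srel M R" "map ?g ys = map ?g xs"
      by (auto simp: pull_struct_def)
    have "inj_on ?g (set ys \<union> set xs)"
      using inj_on_subset[OF inj] srel_subset_elems[OF M ys(1)] xs by (meson Un_least)
    then have "ys = xs"
      using ys(2) map_inj_on by blast
    with ys(1) show "xs \<in> srel M R"
      by simp
  qed (simp add: pull_struct_def)
next
  fix f xs assume xs: "length xs = ar_f f \<and> set xs \<subseteq> elems M"
  let ?N = "pull_struct M k A" and ?g = "pull_cls M k A"
  have "map (inv_into (elems M) ?g) (map ?g xs) = xs"
    unfolding map_map using xs inv_into_f_f[OF inj_on_pull_cls[OF M k]] by (intro map_idI) auto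
  moreover have "set (map ?g xs) \<subseteq> ?g ` elems M"
    using xs by auto
  ultimately show "?g (sfun M f xs) = sfun ?N f (map ?g xs)"
    by (simp add: pull_struct_def)
qed

lemma exists_is_iso_renaming:
  assumes M: "struct M" and "infinite S" and F: "finite F" "F \<subseteq> S" and c: "c ` F \<subseteq> scarr M"
  obtains N g where "isom M N g" "\<forall>b\<in>F. sends M N g (c b) b"
proof -
  obtain j where j: "inj_on j S" "j ` S \<subseteq> S - F"
    using inj_on_into_Diff_finite[OF \<open>infinite S\<close> F(1)] by blast
  \<comment> \<open>j moves the indices of M off F, so that each b \<in> F is free to index the class of c b\<close>
  define A where "A = F \<union> j ` scarr M"
  define k where "k y = (if y \<in> F then c y else inv_into S j y)" for y
  have MS: "scarr M \<subseteq> S"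
    using struct_scarr_subset[OF M] .
  have "k (j x) = x" if "x \<in> scarr M" for x
    using that j MS inv_into_f_f[OF j(1)] unfolding k_def by auto
  then have "k ` j ` scarr M = scarr M"
    unfolding image_image by simp
  moreover have "k ` F \<subseteq> scarr M"
    using c by (auto simp: k_def)
  ultimately have k: "k ` A = scarr M"
    unfolding A_def image_Un by blast
  have A: "A \<subseteq> S"
    using F(2) j(2) MS unfolding A_def by blast
  let ?N = "pull_struct M k A" and ?g = "pull_cls M k A"
  have "sends M ?N ?g (c b) b" if "b \<in> F" for b
  proof -
    have "b \<in> A" "k b = c b" "c b \<in> scarr M"
      using that c by (auto simp: A_def k_def)
    moreover have "scarr ?N = A"
      by (simp add: pull_struct_def)
    ultimately show ?thesis
      using cls_pull_struct[OF M equalityD1[OF k] \<open>b \<in> A\<close>] by (simp add: sends_def)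
  qed
  then show ?thesis
    using that is_iso_pull_struct[OF M A k] by blast
qed

section \<open>The domain map is open\<close>

(* The facts about N and f in a basic neighbourhood of f : M \<rightarrow> N, restated about M along c,
   where f [c b] = [b]. *)
definition pull_diagram :: "('s \<Rightarrow> 's) \<Rightarrow> ('s, 'f, 'r) atom set \<Rightarrow> ('s \<times> 's) set \<Rightarrow> ('s, 'f, 'r) atom set"
  where "pull_diagram c D P = map_atom c ` D \<union> (\<lambda>(a, b). Eqv a (c b)) ` P"

lemma holds_pull_diagram_iff:
  assumes g: "isom M N g" and D: "\<forall>\<alpha>\<in>D. wf_atom ar_f ar_r \<alpha>"
    and c: "\<forall>b \<in> \<Union>(set_atom ` D) \<union> snd ` P. sends M N g (c b) b"
  shows "(\<forall>\<alpha>\<in>D. holds N \<alpha>) \<and> (\<forall>(a, b)\<in>P. sends M N g a b)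
     \<longleftrightarrow> (\<forall>\<alpha>\<in>pull_diagram c D P. holds M \<alpha>)"
proof -
  have "holds N \<alpha> \<longleftrightarrow> holds M (map_atom c \<alpha>)" if "\<alpha> \<in> D" for \<alpha>
    using that D c by (intro holds_is_iso_iff[OF g]) auto
  moreover have "sends M N g a b \<longleftrightarrow> holds M (Eqv a (c b))" if "(a, b) \<in> P" for a b
    using that c by (intro sends_iff_holds_Eqv[OF g]) force
  moreover have "(\<forall>\<alpha>\<in>pull_diagram c D P. holds M \<alpha>) \<longleftrightarrow>
      (\<forall>\<alpha>\<in>D. holds M (map_atom c \<alpha>)) \<and> (\<forall>(a, b)\<in>P. holds M (Eqv a (c b)))"
    unfolding pull_diagram_def by (auto simp del: holds.simps)
  ultimately show ?thesis
    by (auto simp del: holds.simps)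
qed

lemma image_subset_set_atom_pull_diagram:
  "c ` (\<Union>(set_atom ` D) \<union> snd ` P) \<subseteq> \<Union>(set_atom ` pull_diagram c D P)"
proof
  fix b assume "b \<in> c ` (\<Union>(set_atom ` D) \<union> snd ` P)"
  then consider \<alpha> a where "\<alpha> \<in> D" "a \<in> set_atom \<alpha>" "b = c a" | a a' where "(a', a) \<in> P" "b = c a"
    by force
  then show "b \<in> \<Union>(set_atom ` pull_diagram c D P)"
  proof cases
    case 1
    then have "b \<in> set_atom (map_atom c \<alpha>)" "map_atom c \<alpha> \<in> pull_diagram c D P"
      by (simp_all add: atom.set_map pull_diagram_def)
    then show ?thesis by blast
  next
    case 2
    then have "b \<in> set_atom (Eqv a' (c a))" "Eqv a' (c a) \<in> pull_diagram c D P"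
      by (force simp: pull_diagram_def)+
    then show ?thesis by blast
  qed
qed

lemma diagram_pull_diagram:
  assumes "diagram D" "finite P" "struct M" "\<forall>\<alpha>\<in>pull_diagram c D P. holds M \<alpha>"
  shows "diagram (pull_diagram c D P)"
proof -
  have "set_atom \<alpha> \<subseteq> S" if "\<alpha> \<in> pull_diagram c D P" for \<alpha>
    using holds_set_atom assms(4) that struct_scarr_subset[OF assms(3)] by blast
  then show ?thesis
    using assms(1,2) by (auto simp: diagram_def pull_diagram_def)
qed

lemma ISig_iff: "(M, N, g) \<in> ISig ar_f ar_r S \<longleftrightarrow> isom M N g"
  by (simp add: ISig_def)

lemma ISig_isom: "q \<in> ISig ar_f ar_r S \<Longrightarrow> isom (idom q) (icod q) (imap q)"
  by (cases q) (simp add: ISig_iff idom_def icod_def imap_def)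

lemma ISig_MSig: "q \<in> ISig ar_f ar_r S \<Longrightarrow> idom q \<in> MSig ar_f ar_r S \<and> icod q \<in> MSig ar_f ar_r S"
  using is_iso_struct_dom[OF ISig_isom] is_iso_struct_cod[OF ISig_isom] by (simp add: MSig_def)

lemma topspace_ITop: "topspace (ITop ar_f ar_r S) = ISig ar_f ar_r S"
  unfolding ITop_def topology_generated_by_topspace by (auto simp: ISub_def)

definition iso_nbhd ::
    "('s, 'f, 'r) sstr set \<Rightarrow> ('s, 'f, 'r) sstr set \<Rightarrow> ('s \<times> 's) set \<Rightarrow> ('s, 'f, 'r) siso set"
  where "iso_nbhd U V P = {q \<in> ISig ar_f ar_r S. idom q \<in> U \<and> icod q \<in> V
    \<and> (\<forall>(a, b)\<in>P. sends (idom q) (icod q) (imap q) a b)}"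

lemma iso_nbhd_Int:
  "iso_nbhd U V P \<inter> iso_nbhd U' V' P' = iso_nbhd (U \<inter> U') (V \<inter> V') (P \<union> P')"
  unfolding iso_nbhd_def by blast

lemma ISub_iso_nbhdE:
  assumes "G \<in> ISub ar_f ar_r S"
  obtains U V P where "openin (MTop ar_f ar_r S) U" "openin (MTop ar_f ar_r S) V" "finite P"
    "G = iso_nbhd U V P"
proof -
  let ?M = "MSig ar_f ar_r S"
  have open_M: "openin (MTop ar_f ar_r S) ?M"
    using openin_topspace[of "MTop ar_f ar_r S"] by (simp add: topspace_MTop)
  from assms consider "G = ISig ar_f ar_r S"
    | U where "openin (MTop ar_f ar_r S) U" "G = {q \<in> ISig ar_f ar_r S. idom q \<in> U}"
    | U where "openin (MTop ar_f ar_r S) U" "G = {q \<in> ISig ar_f ar_r S. icod q \<in> U}"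
    | a b where "G = {q \<in> ISig ar_f ar_r S. sends (idom q) (icod q) (imap q) a b}"
    unfolding ISub_def sends_def by blast
  then show ?thesis
  proof cases
    case 1
    then have "G = iso_nbhd ?M ?M {}"
      using ISig_MSig by (auto simp: iso_nbhd_def)
    with open_M show ?thesis by (intro that[of ?M ?M "{}"]) simp_all
  next
    case (2 U)
    then have "G = iso_nbhd U ?M {}"
      using ISig_MSig by (auto simp: iso_nbhd_def)
    with open_M 2 show ?thesis by (intro that[of U ?M "{}"]) simp_all
  next
    case (3 U)
    then have "G = iso_nbhd ?M U {}"
      using ISig_MSig by (auto simp: iso_nbhd_def)
    with open_M 3 show ?thesis by (intro that[of ?M U "{}"]) simp_all
  next
    case (4 a b)
    then have "G = iso_nbhd ?M ?M {(a, b)}"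
      using ISig_MSig by (auto simp: iso_nbhd_def)
    with open_M show ?thesis by (intro that[of ?M ?M "{(a, b)}"]) simp_all
  qed
qed

lemma openin_ITop_iso_nbhdE:
  assumes "openin (ITop ar_f ar_r S) G" "q \<in> G"
  obtains U V P where "openin (MTop ar_f ar_r S) U" "openin (MTop ar_f ar_r S) V" "finite P"
    "q \<in> iso_nbhd U V P" "iso_nbhd U V P \<subseteq> G"
proof -
  have "generate_topology_on (ISub ar_f ar_r S) G"
    using assms(1) unfolding ITop_def openin_topology_generated_by_iff .
  then have "\<exists>U V P. openin (MTop ar_f ar_r S) U \<and> openin (MTop ar_f ar_r S) V \<and> finite P
      \<and> q \<in> iso_nbhd U V P \<and> iso_nbhd U V P \<subseteq> G"
    using assms(2)
  proof (induction arbitrary: q)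
    case (Int G1 G2)
    then have "q \<in> G1" "q \<in> G2"
      by simp_all
    obtain U1 V1 P1 where "openin (MTop ar_f ar_r S) U1" "openin (MTop ar_f ar_r S) V1" "finite P1"
        "q \<in> iso_nbhd U1 V1 P1" "iso_nbhd U1 V1 P1 \<subseteq> G1"
      using Int.IH(1)[OF \<open>q \<in> G1\<close>] by (elim exE conjE) blast
    moreover obtain U2 V2 P2 where "openin (MTop ar_f ar_r S) U2" "openin (MTop ar_f ar_r S) V2"
        "finite P2" "q \<in> iso_nbhd U2 V2 P2" "iso_nbhd U2 V2 P2 \<subseteq> G2"
      using Int.IH(2)[OF \<open>q \<in> G2\<close>] by (elim exE conjE) blast
    ultimately have "openin (MTop ar_f ar_r S) (U1 \<inter> U2)" "openin (MTop ar_f ar_r S) (V1 \<inter> V2)"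
      "finite (P1 \<union> P2)" "q \<in> iso_nbhd (U1 \<inter> U2) (V1 \<inter> V2) (P1 \<union> P2)"
      "iso_nbhd (U1 \<inter> U2) (V1 \<inter> V2) (P1 \<union> P2) \<subseteq> G1 \<inter> G2"
      unfolding iso_nbhd_Int[symmetric] by auto
    then show ?case
      by blast
  next
    case (UN K)
    then obtain G where "G \<in> K" "q \<in> G"
      by blast
    then obtain U V P where "openin (MTop ar_f ar_r S) U" "openin (MTop ar_f ar_r S) V" "finite P"
        "q \<in> iso_nbhd U V P" "iso_nbhd U V P \<subseteq> G"
      using UN.IH[OF \<open>G \<in> K\<close> \<open>q \<in> G\<close>] by (elim exE conjE) blast
    with \<open>G \<in> K\<close> show ?case
      by blast
  next
    case (Basis G)
    obtain U V P where "openin (MTop ar_f ar_r S) U" "openin (MTop ar_f ar_r S) V" "finite P"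
        "G = iso_nbhd U V P"
      by (rule ISub_iso_nbhdE[OF Basis.hyps])
    with Basis.prems show ?case
      by (intro exI[of _ U] exI[of _ V] exI[of _ P]) simp
  qed simp
  then show ?thesis
    using that by blast
qed

lemma idom_image_iso_nbhdI:
  assumes "infinite S" and M': "struct M'" "M' \<in> U"
    and D: "\<forall>\<alpha>\<in>D. wf_atom ar_f ar_r \<alpha>" "diagram_nbhd D \<subseteq> V"
    and F: "finite (\<Union>(set_atom ` D) \<union> snd ` P)" "\<Union>(set_atom ` D) \<union> snd ` P \<subseteq> S"
    and M'_D: "\<forall>\<alpha>\<in>pull_diagram c D P. holds M' \<alpha>"
  shows "M' \<in> idom ` iso_nbhd U V P"
proof -
  let ?F = "\<Union>(set_atom ` D) \<union> snd ` P"
  have "c ` ?F \<subseteq> scarr M'"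
    using image_subset_set_atom_pull_diagram[of c D P] holds_set_atom M'_D by blast
  then obtain N' g where g: "isom M' N' g" and c: "\<forall>b\<in>?F. sends M' N' g (c b) b"
    using exists_is_iso_renaming[OF M'(1) \<open>infinite S\<close> F] by blast
  have "(\<forall>\<alpha>\<in>D. holds N' \<alpha>) \<and> (\<forall>(a, b)\<in>P. sends M' N' g a b)"
    using holds_pull_diagram_iff[OF g D(1) c] M'_D by blast
  then have "(M', N', g) \<in> iso_nbhd U V P"
    using D(2) g M'(2) is_iso_struct_cod[OF g]
    by (auto simp: diagram_nbhd_def MSig_def iso_nbhd_def ISig_iff idom_def icod_def imap_def)
  then show ?thesis
    by (force simp: idom_def)
qed

lemma openin_idom_image_iso_nbhd:
  assumes "infinite S" and U: "openin (MTop ar_f ar_r S) U" and V: "openin (MTop ar_f ar_r S) V"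
    and P: "finite P"
  shows "openin (MTop ar_f ar_r S) (idom ` iso_nbhd U V P)"
  unfolding openin_subopen[of _ "idom ` iso_nbhd U V P"]
proof
  fix M assume "M \<in> idom ` iso_nbhd U V P"
  then obtain N f where "(M, N, f) \<in> iso_nbhd U V P"
    by (auto simp: idom_def)
  then have f: "isom M N f" and "M \<in> U" "N \<in> V" and f_P: "\<forall>(a, b)\<in>P. sends M N f a b"
    by (simp_all add: iso_nbhd_def ISig_iff idom_def icod_def imap_def)
  obtain D where D: "diagram D" "N \<in> diagram_nbhd D" "diagram_nbhd D \<subseteq> V"
    using openin_MTop_diagram_nbhdE[OF V \<open>N \<in> V\<close>] .
  define F where "F = \<Union>(set_atom ` D) \<union> snd ` P"
  have "set_atom \<alpha> \<subseteq> scarr N" if "\<alpha> \<in> D" for \<alpha>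
    using D(2) that by (intro holds_set_atom) (simp add: diagram_nbhd_def)
  moreover have "b \<in> scarr N" if "(a, b) \<in> P" for a b
    using f_P that by (auto simp: sends_def)
  ultimately have F: "finite F" "F \<subseteq> scarr N" "F \<subseteq> S"
    using D(1) P struct_scarr_subset[OF is_iso_struct_cod[OF f]] unfolding F_def diagram_def
    by force+
  have "\<exists>a. sends M N f a b" if "b \<in> F" for b
    using is_iso_sends_surj[OF f] F(2) that by blast
  then obtain c where c: "\<forall>b\<in>F. sends M N f (c b) b"
    by metis
  have wf_D: "\<forall>\<alpha>\<in>D. wf_atom ar_f ar_r \<alpha>"
    using D(1) by (simp add: diagram_def)
  define W where "W = U \<inter> diagram_nbhd (pull_diagram c D P)"
  have "\<forall>\<alpha>\<in>pull_diagram c D P. holds M \<alpha>"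
    using holds_pull_diagram_iff[OF f wf_D] c D(2) f_P unfolding F_def diagram_nbhd_def by blast
  then have "diagram (pull_diagram c D P)" "M \<in> W"
    using diagram_pull_diagram[OF D(1) P is_iso_struct_dom[OF f]] \<open>M \<in> U\<close> is_iso_struct_dom[OF f]
    by (simp_all add: W_def diagram_nbhd_def MSig_def)
  moreover have "W \<subseteq> idom ` iso_nbhd U V P"
  proof
    fix M' assume "M' \<in> W"
    then show "M' \<in> idom ` iso_nbhd U V P"
      using idom_image_iso_nbhdI[OF \<open>infinite S\<close> _ _ wf_D D(3), where c = c] F(1,3)
      by (simp add: W_def F_def diagram_nbhd_def MSig_def)
  qed
  ultimately show "\<exists>W. openin (MTop ar_f ar_r S) W \<and> M \<in> W \<and> W \<subseteq> idom ` iso_nbhd U V P"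
    using openin_Int[OF U openin_diagram_nbhd] unfolding W_def by blast
qed

lemma open_map_idom:
  assumes "infinite S"
  shows "open_map (ITop ar_f ar_r S) (MTop ar_f ar_r S) idom"
  unfolding open_map_def
proof (intro allI impI)
  fix G assume G: "openin (ITop ar_f ar_r S) G"
  show "openin (MTop ar_f ar_r S) (idom ` G)"
    unfolding openin_subopen[of _ "idom ` G"]
  proof
    fix M assume "M \<in> idom ` G"
    then obtain q where "q \<in> G" "M = idom q"
      by blast
    then obtain U V P where "openin (MTop ar_f ar_r S) U" "openin (MTop ar_f ar_r S) V" "finite P"
        "q \<in> iso_nbhd U V P" "iso_nbhd U V P \<subseteq> G"
      using openin_ITop_iso_nbhdE[OF G] by metis
    then have "openin (MTop ar_f ar_r S) (idom ` iso_nbhd U V P)" "M \<in> idom ` iso_nbhd U V P"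
        "idom ` iso_nbhd U V P \<subseteq> idom ` G"
      using openin_idom_image_iso_nbhd[OF assms] \<open>M = idom q\<close> by auto
    then show "\<exists>W. openin (MTop ar_f ar_r S) W \<and> M \<in> W \<and> W \<subseteq> idom ` G"
      by blast
  qed
qed

section \<open>Inversion of isomorphisms\<close>

definition inv_map :: "('s, 'f, 'r) sstr \<Rightarrow> ('s, 'f, 'r) sstr \<Rightarrow> ('s set \<Rightarrow> 's set) \<Rightarrow> 's set \<Rightarrow> 's set"
  where "inv_map M N g Y = (if Y \<in> elems N then inv_into (elems M) g Y else {})"

lemma
  assumes g: "isom M N g"
  shows inv_map_in_elems: "Y \<in> elems N \<Longrightarrow> inv_map M N g Y \<in> elems M"
    and f_inv_map: "Y \<in> elems N \<Longrightarrow> g (inv_map M N g Y) = Y"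
    and inv_map_f: "X \<in> elems M \<Longrightarrow> inv_map M N g (g X) = X"
  using is_iso_bij_betw[OF g] is_iso_image_elems[OF g]
  by (auto simp: inv_map_def inv_into_into f_inv_into_f bij_betw_inv_into_left)

lemma inv_map_eq_iff:
  assumes g: "isom M N g" and "X \<in> elems M" "Y \<in> elems N"
  shows "inv_map M N g Y = X \<longleftrightarrow> g X = Y"
  using f_inv_map[OF g \<open>Y \<in> elems N\<close>] inv_map_f[OF g \<open>X \<in> elems M\<close>] by auto

lemma is_iso_inv_map:
  assumes g: "isom M N g"
  shows "isom N M (inv_map M N g)"
  unfolding is_iso_def
proof (intro conjI allI impI)
  let ?h = "inv_map M N g"
  show "struct N" "struct M"
    using is_iso_struct_dom[OF g] is_iso_struct_cod[OF g] by simp_all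
  have "bij_betw (inv_into (elems M) g) (elems N) (elems M)"
    using bij_betw_inv_into[OF is_iso_bij_betw[OF g]] .
  then show "bij_betw ?h (elems N) (elems M)"
    by (rule bij_betw_cong[THEN iffD1, rotated]) (simp add: inv_map_def)
  show "?h Y = {}" if "Y \<notin> elems N" for Y
    using that by (simp add: inv_map_def)
  fix R ys assume ys: "set ys \<subseteq> elems N"
  have "map g (map ?h ys) = ys"
    using ys f_inv_map[OF g] by (simp add: map_idI subset_iff)
  moreover have "set (map ?h ys) \<subseteq> elems M"
    using ys inv_map_in_elems[OF g] by auto
  ultimately show "ys \<in> srel N R \<longleftrightarrow> map ?h ys \<in> srel M R"
    using is_iso_srel_iff[OF g, of "map ?h ys" R] by simp
next
  fix f ys assume ys: "length ys = ar_f f \<and> set ys \<subseteq> elems N"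
  let ?h = "inv_map M N g"
  have hys: "set (map ?h ys) \<subseteq> elems M" "length (map ?h ys) = ar_f f"
    using ys inv_map_in_elems[OF g] by auto
  have "map g (map ?h ys) = ys"
    using ys f_inv_map[OF g] by (simp add: map_idI subset_iff)
  then have "g (sfun M f (map ?h ys)) = sfun N f ys"
    using is_iso_sfun[OF g hys(2,1)] by simp
  then show "?h (sfun N f ys) = sfun M f (map ?h ys)"
    using inv_map_f[OF g sfun_in_elems[OF is_iso_struct_dom[OF g] hys(2,1)]] by simp
qed

lemma inv_map_inv_map:
  assumes g: "isom M N g"
  shows "inv_map N M (inv_map M N g) = g"
proof
  fix X
  show "inv_map N M (inv_map M N g) X = g X"
  proof (cases "X \<in> elems M")
    case True
    then have "g X \<in> elems N"
      using is_iso_image_elems[OF g] by blast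
    with True show ?thesis
      using inv_map_eq_iff[OF is_iso_inv_map[OF g]] inv_map_f[OF g] by simp
  next
    case False
    then show ?thesis
      using is_iso_outside_elems[OF g] by (simp add: inv_map_def)
  qed
qed

lemma sends_inv_map_iff:
  assumes g: "isom M N g"
  shows "sends N M (inv_map M N g) b a \<longleftrightarrow> sends M N g a b"
proof -
  have "inv_map M N g (cls N b) = cls M a \<longleftrightarrow> g (cls M a) = cls N b"
    if "a \<in> scarr M" "b \<in> scarr N"
    using inv_map_eq_iff[OF g cls_in_elems[OF is_iso_struct_dom[OF g] that(1)]
        cls_in_elems[OF is_iso_struct_cod[OF g] that(2)]] .
  then show ?thesis
    unfolding sends_def by blast
qed

definition inv_iso :: "('s, 'f, 'r) siso \<Rightarrow> ('s, 'f, 'r) siso"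
  where "inv_iso q = (icod q, idom q, inv_map (idom q) (icod q) (imap q))"

lemma idom_inv_iso [simp]: "idom (inv_iso q) = icod q"
  and icod_inv_iso [simp]: "icod (inv_iso q) = idom q"
  and imap_inv_iso [simp]: "imap (inv_iso q) = inv_map (idom q) (icod q) (imap q)"
  by (simp_all add: inv_iso_def idom_def icod_def imap_def)

lemma inv_iso_ISig: "q \<in> ISig ar_f ar_r S \<Longrightarrow> inv_iso q \<in> ISig ar_f ar_r S"
  using is_iso_inv_map[OF ISig_isom] by (simp add: inv_iso_def ISig_iff)

lemma inv_iso_inv_iso:
  assumes "q \<in> ISig ar_f ar_r S"
  shows "inv_iso (inv_iso q) = q"
proof -
  obtain M N g where q: "q = (M, N, g)"
    by (cases q)
  then have "isom M N g"
    using assms by (simp add: ISig_iff)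
  then show ?thesis
    using inv_map_inv_map by (simp add: q inv_iso_def idom_def icod_def imap_def)
qed

lemma inv_iso_preimage_iso_nbhd:
  "{q \<in> ISig ar_f ar_r S. inv_iso q \<in> iso_nbhd U V P} = iso_nbhd V U (prod.swap ` P)"
proof (rule set_eqI)
  fix q
  have swap: "(\<forall>(a, b)\<in>prod.swap ` P. R a b) \<longleftrightarrow> (\<forall>(a, b)\<in>P. R b a)" for R
    by auto
  show "q \<in> {q \<in> ISig ar_f ar_r S. inv_iso q \<in> iso_nbhd U V P} \<longleftrightarrow> q \<in> iso_nbhd V U (prod.swap ` P)"
  proof (cases "q \<in> ISig ar_f ar_r S")
    case True
    have "(\<forall>(a, b)\<in>P. sends (icod q) (idom q) (imap (inv_iso q)) a b)
        \<longleftrightarrow> (\<forall>(a, b)\<in>P. sends (idom q) (icod q) (imap q) b a)"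
      using sends_inv_map_iff[OF ISig_isom[OF True]] by simp
    then show ?thesis
      using True inv_iso_ISig[OF True] unfolding iso_nbhd_def swap by auto
  next
    case False
    then show ?thesis
      by (simp add: iso_nbhd_def)
  qed
qed

lemma openin_ITop_sends:
  "openin (ITop ar_f ar_r S) {q \<in> ISig ar_f ar_r S. sends (idom q) (icod q) (imap q) a b}"
proof (cases "a \<in> S \<and> b \<in> S")
  case True
  then have "{q \<in> ISig ar_f ar_r S. sends (idom q) (icod q) (imap q) a b} \<in> ISub ar_f ar_r S"
    unfolding ISub_def sends_def by blast
  then show ?thesis
    unfolding ITop_def by (rule topology_generated_by_Basis)
next
  case False
  have "scarr (idom q) \<subseteq> S" "scarr (icod q) \<subseteq> S" if "q \<in> ISig ar_f ar_r S" for q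
    using ISig_MSig[OF that] struct_scarr_subset by (simp_all add: MSig_def)
  with False have "\<not> sends (idom q) (icod q) (imap q) a b" if "q \<in> ISig ar_f ar_r S" for q
    using that unfolding sends_def by blast
  then have "{q \<in> ISig ar_f ar_r S. sends (idom q) (icod q) (imap q) a b} = {}"
    by blast
  then show ?thesis
    by (simp only: openin_empty)
qed

lemma openin_iso_nbhd:
  assumes U: "openin (MTop ar_f ar_r S) U" and V: "openin (MTop ar_f ar_r S) V" and "finite P"
  shows "openin (ITop ar_f ar_r S) (iso_nbhd U V P)"
  using \<open>finite P\<close>
proof (induction P rule: finite_induct)
  case empty
  have "{q \<in> ISig ar_f ar_r S. idom q \<in> U} \<in> ISub ar_f ar_r S"
    "{q \<in> ISig ar_f ar_r S. icod q \<in> V} \<in> ISub ar_f ar_r S"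
    using U V unfolding ISub_def by blast+
  then have "openin (ITop ar_f ar_r S)
      ({q \<in> ISig ar_f ar_r S. idom q \<in> U} \<inter> {q \<in> ISig ar_f ar_r S. icod q \<in> V})"
    unfolding ITop_def by (intro openin_Int topology_generated_by_Basis)
  moreover have "iso_nbhd U V {}
      = {q \<in> ISig ar_f ar_r S. idom q \<in> U} \<inter> {q \<in> ISig ar_f ar_r S. icod q \<in> V}"
    by (auto simp: iso_nbhd_def)
  ultimately show ?case
    by simp
next
  case (insert p P)
  obtain a b where p: "p = (a, b)"
    by (cases p)
  have "U \<subseteq> MSig ar_f ar_r S" "V \<subseteq> MSig ar_f ar_r S"
    using openin_subset[OF U] openin_subset[OF V] by (simp_all add: topspace_MTop)
  then have "iso_nbhd U V (insert p P) = iso_nbhd U V P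
      \<inter> {q \<in> ISig ar_f ar_r S. sends (idom q) (icod q) (imap q) a b}"
    using ISig_MSig by (auto simp: iso_nbhd_def p)
  then show ?case
    using insert.IH openin_ITop_sends by (simp add: openin_Int)
qed

lemma homeomorphic_map_inv_iso: "homeomorphic_map (ITop ar_f ar_r S) (ITop ar_f ar_r S) inv_iso"
proof (rule homeomorphic_map_involution)
  have "openin (ITop ar_f ar_r S) (inv_iso -` G \<inter> ISig ar_f ar_r S)" if G: "G \<in> ISub ar_f ar_r S" for G
  proof -
    obtain U V P where "openin (MTop ar_f ar_r S) U" "openin (MTop ar_f ar_r S) V" "finite P"
        "G = iso_nbhd U V P"
      by (rule ISub_iso_nbhdE[OF G])
    moreover have "inv_iso -` iso_nbhd U V P \<inter> ISig ar_f ar_r S = iso_nbhd V U (prod.swap ` P)"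
      using inv_iso_preimage_iso_nbhd by blast
    ultimately show ?thesis
      by (simp add: openin_iso_nbhd)
  qed
  moreover have "inv_iso ` ISig ar_f ar_r S \<subseteq> \<Union>(ISub ar_f ar_r S)"
    using inv_iso_ISig by (auto simp: ISub_def)
  ultimately show "continuous_map (ITop ar_f ar_r S) (ITop ar_f ar_r S) inv_iso"
    unfolding topspace_ITop by (subst (2) ITop_def) (rule continuous_on_generated_topo; simp add: topspace_ITop)
  show "inv_iso (inv_iso q) = q" if "q \<in> topspace (ITop ar_f ar_r S)" for q
    using that inv_iso_inv_iso by (simp add: topspace_ITop)
qed

lemma open_map_icod:
  assumes "infinite S"
  shows "open_map (ITop ar_f ar_r S) (MTop ar_f ar_r S) icod"
proof -
  have "icod = idom \<circ> inv_iso"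
    by (simp add: fun_eq_iff)
  then show ?thesis
    using open_map_compose[OF homeomorphic_imp_open_map[OF homeomorphic_map_inv_iso]
        open_map_idom[OF assms]] by simp
qed

lemma MT_is_iso_iff:
  assumes T: "geometric_theory ar_f ar_r T" and g: "isom M N g"
  shows "M \<in> MT ar_f ar_r S T \<longleftrightarrow> N \<in> MT ar_f ar_r S T"
  using MT_is_iso[OF g _ T] MT_is_iso[OF is_iso_inv_map[OF g] _ T] by blast

lemma IT_eq_preimage:
  assumes "geometric_theory ar_f ar_r T"
  shows "{q \<in> topspace (ITop ar_f ar_r S). idom q \<in> MT ar_f ar_r S T} = IT ar_f ar_r S T"
    and "{q \<in> topspace (ITop ar_f ar_r S). icod q \<in> MT ar_f ar_r S T} = IT ar_f ar_r S T"
  using MT_is_iso_iff[OF assms ISig_isom] by (auto simp: topspace_ITop IT_def)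

end

theorem proposition2p8:
  fixes ar_f :: "'f \<Rightarrow> nat" and ar_r :: "'r \<Rightarrow> nat" and S :: "'s set"
    and T :: "('f, 'r, 'i) gseq set"
  assumes "infinite S"
    and "(UNIV :: ('f + 'r) set) \<lesssim> S"
    and "geometric_theory ar_f ar_r T"
  shows "open_map (subtopology (ITop ar_f ar_r S) (IT ar_f ar_r S T))
                  (subtopology (MTop ar_f ar_r S) (MT ar_f ar_r S T)) idom
       \<and> open_map (subtopology (ITop ar_f ar_r S) (IT ar_f ar_r S T))
                  (subtopology (MTop ar_f ar_r S) (MT ar_f ar_r S T)) icod"
  using open_map_restriction[OF open_map_idom[OF assms(1)] IT_eq_preimage(1)[OF assms(3)]]
    open_map_restriction[OF open_map_icod[OF assms(1)] IT_eq_preimage(2)[OF assms(3)]]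
  by blast

end
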